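(* For every integer $n\geq 1$, $$\mathrm{SH}_n=\sum_{\substack{\lambda\vdash n\\ \text{all parts }\lambda_i\text{ odd}}} z_\lambda^{-1}\,2^{\ell(\lambda)}(n+1)^{\ell(\lambda)-1}\,p_\lambda ,$$ where $\ell(\lambda)$ is the number of nonzero parts of $\lambda$ and $z_\lambda=\prod_i i^{m_i}m_i!$ when $\lambda$ has $m_i$ parts equal to $i$.
   Context: Work in the ring $\Lambda_{\mathbb Q}$ of symmetric functions with rational coefficients in variables $x=(x_1,x_2,\dots)$; $p_k$ denotes the power sum, $p_\lambda=p_{\lambda_1}p_{\lambda_2}\cdots$. For $f\in\Lambda_{\mathbb Q}$, its shiftification $f(x/x)$ is obtained by writing $f$ as a polynomial in the power sums and substituting $p_{2i+1}\mapsto 2p_{2i+1}$ and $p_{2i}\mapsto 0$ for all $i\ge1$ (equivalently, $f(x/x)=(\omega_y f(x,y))|_{y=x}$, where $\omega_y$ is the involution $\omega$ acting on a second variable set $y$ only). A parking function of length $n$ is a sequence $(a_1,\dots,a_n)$ of positive integers whose weakly increasing rearrangement $b_1\le\cdots\le b_n$ satisfies $b_i\le i$ for all $i$. The symmetric group $S_n$ acts on the set of parking functions of length $n$ by permuting coordinates; $\mathrm{PF}_n$ denotes the Frobenius characteristic of this permutation representation ($\mathrm{PF}_0=1$). Define $\mathrm{SH}_n(x)=\mathrm{PF}_n(x/x)$. *)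

theory Defs
  imports Complex_Main "HOL-Library.Multiset" "HOL-Combinatorics.Permutations"
begin

text \<open>Symmetric functions over Q are represented by their coefficients in the
power-sum basis: Lambda_Q = Q[p_1,p_2,...] has basis p_lambda indexed by partitions,
a partition being a finite multiset of positive naturals.  An element is the
(finitely supported) coefficient function.\<close>

type_synonym symfun = "nat multiset \<Rightarrow> rat"

definition psum :: "nat multiset \<Rightarrow> symfun" where
  "psum lam = (\<lambda>mu. if mu = lam then 1 else 0)"

definition parking_function :: "nat list \<Rightarrow> bool" where
  "parking_function a \<longleftrightarrow>
     (\<forall>i<length a. 1 \<le> sort a ! i \<and> sort a ! i \<le> i + 1)"

definition parking_functions :: "nat \<Rightarrow> nat list set" where
  "parking_functions n = {a. length a = n \<and> parking_function a}"

definition perm_act :: "(nat \<Rightarrow> nat) \<Rightarrow> nat list \<Rightarrow> nat list" where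
  "perm_act \<sigma> a = map (\<lambda>i. a ! (inv \<sigma> i)) [0..<length a]"

definition cycle_type :: "nat \<Rightarrow> (nat \<Rightarrow> nat) \<Rightarrow> nat multiset" where
  "cycle_type n \<sigma> =
     image_mset card (mset_set ((\<lambda>x. {(\<sigma> ^^ k) x | k. True}) ` {..<n}))"

definition frob :: "nat \<Rightarrow> ((nat \<Rightarrow> nat) \<Rightarrow> rat) \<Rightarrow> symfun" where
  "frob n \<chi> = (\<lambda>mu. (1 / fact n) *
      (\<Sum>\<sigma>\<in>{\<sigma>. \<sigma> permutes {..<n} \<and> cycle_type n \<sigma> = mu}. \<chi> \<sigma>))"

text \<open>PF_n: Frobenius characteristic of the permutation representation on parking
functions; its character is the number of fixed points.\<close>
definition PF :: "nat \<Rightarrow> symfun" where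
  "PF n = frob n (\<lambda>\<sigma>. of_nat (card {a \<in> parking_functions n. perm_act \<sigma> a = a}))"

text \<open>Shiftification: p_{odd k} -> 2 p_k, p_{even k} -> 0, extended multiplicatively
and linearly; on the power-sum coefficients this is the following map.\<close>
definition shiftify :: "symfun \<Rightarrow> symfun" where
  "shiftify f = (\<lambda>mu. if (\<forall>i\<in>#mu. odd i) then 2 ^ size mu * f mu else 0)"

definition SH :: "nat \<Rightarrow> symfun" where
  "SH n = shiftify (PF n)"

definition zee :: "nat multiset \<Rightarrow> rat" where
  "zee lam = (\<Prod>i\<in>set_mset lam. of_nat (i ^ count lam i * fact (count lam i)))"

definition odd_partitions :: "nat \<Rightarrow> nat multiset set" where
  "odd_partitions n = {lam. (\<forall>i\<in>#lam. 0 < i \<and> odd i) \<and> sum_mset lam = n}"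

end

theory Submission
  imports Defs "HOL-Combinatorics.Cycles" "HOL-Combinatorics.Orbits"
begin

text \<open>
  The coefficient of $p_\lambda$ in the Frobenius characteristic of a permutation representation
  is $1/n!$ times the sum, over the permutations $\sigma$ of cycle type $\lambda$, of the
  number of points fixed by $\sigma$. A list fixed by $\sigma$ is constant on the cycles of
  $\sigma$, so $\sigma$ fixes $(n+1)^{\ell(\lambda)}$ lists in $[n+1]^n$. By Pollak's cycle
  lemma exactly one of the $n+1$ cyclic shifts (mod $n+1$) of the values of such a list is a
  parking function, and these shifts commute with $\sigma$; hence $\sigma$ fixes
  $(n+1)^{\ell(\lambda)-1}$ parking functions. There are $n!/z_\lambda$ permutations of type
  $\lambda$ (split off the cycle through a chosen point and recurse), so
  $\mathrm{PF}_n = \sum_\lambda z_\lambda^{-1} (n+1)^{\ell(\lambda)-1} p_\lambda$, and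
  shiftification keeps the odd $\lambda$ with the factor $2^{\ell(\lambda)}$.
\<close>

section \<open>Cycle types of permutations\<close>

definition cycle_type_on :: "'a set \<Rightarrow> ('a \<Rightarrow> 'a) \<Rightarrow> nat multiset" where
  "cycle_type_on S \<sigma> = image_mset card (mset_set (orbit \<sigma> ` S))"

lemma cycle_type_eq_cycle_type_on:
  assumes "\<sigma> permutes {..<n}"
  shows "cycle_type n \<sigma> = cycle_type_on {..<n} \<sigma>"
proof -
  have "permutation \<sigma>" using assms by (auto simp: permutation_permutes)
  then show ?thesis by (simp add: cycle_type_def cycle_type_on_def orbit_altdef_permutation)
qed

lemma size_cycle_type_on: "size (cycle_type_on S \<sigma>) = card (orbit \<sigma> ` S)"
  by (simp add: cycle_type_on_def)

lemma funpow_cycle_of_list_nth: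
  assumes "distinct L" "j < length L"
  shows "(cycle_of_list L ^^ i) (L ! j) = L ! ((i + j) mod length L)"
  using cyclic_rotation[OF assms(1), of i] assms(2) by (metis nth_map nth_rotate)

lemma orbit_cycle_of_list:
  assumes "distinct L" "x \<in> set L"
  shows "orbit (cycle_of_list L) x = set L"
proof
  show "orbit (cycle_of_list L) x \<subseteq> set L"
    by (rule permutes_orbit_subset[OF cycle_permutes assms(2)])
  show "set L \<subseteq> orbit (cycle_of_list L) x"
  proof
    fix y assume "y \<in> set L"
    then obtain t where t: "t < length L" "y = L ! t" by (auto simp: in_set_conv_nth)
    obtain j where j: "j < length L" "x = L ! j" using assms(2) by (auto simp: in_set_conv_nth)
    have "(t + length L - j + j) mod length L = t" using t(1) j(1) by simp
    then have "(cycle_of_list L ^^ (t + length L - j)) x = y"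
      using funpow_cycle_of_list_nth[OF assms(1) j(1)] j(2) t(2) by simp
    then show "y \<in> orbit (cycle_of_list L) x"
      by (auto simp: orbit_altdef_permutation permutation_of_cycle)
  qed
qed

lemma permutes_cycle_of_list_comp:
  assumes "\<tau> permutes T" "set L \<inter> T = {}"
  shows "cycle_of_list L \<circ> \<tau> permutes (set L \<union> T)"
  by (meson assms(1) cycle_permutes permutes_compose permutes_subset sup_ge1 sup_ge2)

lemma cycle_of_list_comp_eq_on:
  assumes "\<tau> permutes T" "set L \<inter> T = {}"
  shows "y \<in> set L \<Longrightarrow> (cycle_of_list L \<circ> \<tau>) y = cycle_of_list L y"
    and "y \<in> T \<Longrightarrow> (cycle_of_list L \<circ> \<tau>) y = \<tau> y"
proof -
  assume "y \<in> set L"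
  then have "y \<notin> T" using assms(2) by blast
  then show "(cycle_of_list L \<circ> \<tau>) y = cycle_of_list L y" using permutes_not_in[OF assms(1)] by simp
next
  assume "y \<in> T"
  then have "\<tau> y \<notin> set L" using permutes_in_image[OF assms(1)] assms(2) by blast
  then show "(cycle_of_list L \<circ> \<tau>) y = \<tau> y" by (simp add: id_outside_supp)
qed

lemma orbit_cycle_of_list_comp:
  assumes "distinct L" "\<tau> permutes T" "set L \<inter> T = {}"
  shows "x \<in> set L \<Longrightarrow> orbit (cycle_of_list L \<circ> \<tau>) x = set L"
    and "y \<in> T \<Longrightarrow> orbit (cycle_of_list L \<circ> \<tau>) y = orbit \<tau> y"
proof -
  assume x: "x \<in> set L"
  have "orbit (cycle_of_list L \<circ> \<tau>) x = orbit (cycle_of_list L) x"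
    by (rule orbit_cong0[OF x])
      (use cycle_of_list_comp_eq_on[OF assms(2,3)] cycle_permutes[of L] in
        \<open>auto simp: permutes_in_image\<close>)
  then show "orbit (cycle_of_list L \<circ> \<tau>) x = set L" using orbit_cycle_of_list[OF assms(1) x] by simp
next
  assume y: "y \<in> T"
  show "orbit (cycle_of_list L \<circ> \<tau>) y = orbit \<tau> y"
    by (rule orbit_cong0[OF y])
      (use cycle_of_list_comp_eq_on[OF assms(2,3)] assms(2) in \<open>auto simp: permutes_in_image\<close>)
qed

lemma cycle_type_on_cycle_of_list_comp:
  assumes "distinct L" "L \<noteq> []" "\<tau> permutes T" "set L \<inter> T = {}" "finite T"
  shows "cycle_type_on (set L \<union> T) (cycle_of_list L \<circ> \<tau>) = add_mset (length L) (cycle_type_on T \<tau>)"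
proof -
  have "orbit (cycle_of_list L \<circ> \<tau>) ` (set L \<union> T) = insert (set L) (orbit \<tau> ` T)"
    using orbit_cycle_of_list_comp[OF assms(1,3,4)] assms(2) by (auto simp: image_Un image_constant_conv)
  moreover have "set L \<notin> orbit \<tau> ` T"
  proof
    assume "set L \<in> orbit \<tau> ` T"
    then have "set L \<subseteq> T" using permutes_orbit_subset[OF assms(3)] by blast
    then show False using assms(2,4) by (simp add: Int_absorb2)
  qed
  ultimately show ?thesis
    using assms(1,5) by (simp add: cycle_type_on_def distinct_card)
qed

lemma funpow_cycle_of_list_comp_hd:
  assumes "distinct L" "\<tau> permutes T" "set L \<inter> T = {}" "i < length L"
  shows "((cycle_of_list L \<circ> \<tau>) ^^ i) (hd L) = L ! i"
proof -
  have nonempty: "L \<noteq> []" using assms(4) by auto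
  have "((cycle_of_list L \<circ> \<tau>) ^^ k) (L ! 0) = (cycle_of_list L ^^ k) (L ! 0)" for k
  proof (induction k)
    case (Suc k)
    have "(cycle_of_list L ^^ k) (L ! 0) \<in> set L"
      using funpow_cycle_of_list_nth[OF assms(1), of 0 k] nonempty by simp
    then show ?case using Suc cycle_of_list_comp_eq_on[OF assms(2,3)] by simp
  qed simp
  then show ?thesis
    using funpow_cycle_of_list_nth[OF assms(1), of 0 i] assms(4) nonempty by (simp add: hd_conv_nth)
qed

lemma cycle_of_list_comp_inj:
  assumes "distinct L1" "L1 \<noteq> []" "\<tau>1 permutes T1" "set L1 \<inter> T1 = {}"
    and "distinct L2" "L2 \<noteq> []" "\<tau>2 permutes T2" "set L2 \<inter> T2 = {}"
    and "hd L1 = hd L2" "cycle_of_list L1 \<circ> \<tau>1 = cycle_of_list L2 \<circ> \<tau>2"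
  shows "L1 = L2 \<and> \<tau>1 = \<tau>2"
proof -
  let ?g = "cycle_of_list L1 \<circ> \<tau>1"
  have "set L1 = orbit ?g (hd L1)"
    using orbit_cycle_of_list_comp(1)[OF assms(1,3,4)] assms(2) by simp
  moreover have "set L2 = orbit ?g (hd L1)"
    using orbit_cycle_of_list_comp(1)[OF assms(5,7,8)] assms(6,9,10) by simp
  ultimately have len: "length L1 = length L2" using assms(1,5) by (metis distinct_card)
  have L: "L1 = L2"
  proof (rule nth_equalityI[OF len])
    fix i assume i: "i < length L1"
    have "L1 ! i = (?g ^^ i) (hd L1)" using funpow_cycle_of_list_comp_hd[OF assms(1,3,4) i] by simp
    also have "\<dots> = ((cycle_of_list L2 \<circ> \<tau>2) ^^ i) (hd L2)" using assms(9,10) by simp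
    also have "\<dots> = L2 ! i" using funpow_cycle_of_list_comp_hd[OF assms(5,7,8)] i len by simp
    finally show "L1 ! i = L2 ! i" .
  qed
  have "bij (cycle_of_list L1)" by (rule permutation_bijective[OF permutation_of_cycle])
  then have "\<tau>1 = \<tau>2" using assms(10) unfolding L by (auto simp: fun_eq_iff dest: bij_is_inj injD)
  with L show ?thesis ..
qed

lemma permutes_split_cycle:
  assumes "\<sigma> permutes S" "finite S" "x \<in> S"
  obtains L \<tau> where "distinct L" "L \<noteq> []" "hd L = x" "set L \<subseteq> S"
    "\<tau> permutes (S - set L)" "\<sigma> = cycle_of_list L \<circ> \<tau>"
proof -
  have perm: "permutation \<sigma>" using assms(1,2) by (auto simp: permutation_permutes)
  define L where "L = support \<sigma> x"
  define \<tau> where "\<tau> = perm_restrict \<sigma> (S - set L)"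
  have orb: "set L = orbit \<sigma> x"
    using support_set[OF perm] orbit_altdef_permutation[OF perm] by (auto simp: L_def)
  have L: "distinct L" "L \<noteq> []" "hd L = x" "set L \<subseteq> S"
    using cycle_of_permutation[OF perm] least_power_of_permutation(2)[OF perm, of x]
      orb permutes_orbit_subset[OF assms(1,3)] by (auto simp: L_def hd_map)
  have \<tau>: "\<tau> permutes (S - set L)"
    unfolding \<tau>_def using perm_restrict_diff_cyclic[OF assms(1)] cyclic_on_orbit[OF assms(1,2)] orb
    by simp
  have "\<sigma> y = (cycle_of_list L \<circ> \<tau>) y" for y
  proof (cases "y \<in> set L")
    case True
    then show ?thesis using cycle_restrict[OF perm, of y x] by (simp add: L_def \<tau>_def perm_restrict_def)
  next
    case False
    have "\<tau> y = \<sigma> y \<and> \<tau> y \<notin> set L"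
    proof (cases "y \<in> S")
      case True
      then have "y \<in> S - set L" using False by blast
      then show ?thesis using permutes_in_image[OF \<tau>, of y] by (simp add: \<tau>_def perm_restrict_def)
    next
      case outside: False
      then show ?thesis
        using False permutes_not_in[OF assms(1) outside] by (simp add: \<tau>_def perm_restrict_def)
    qed
    then show ?thesis by (metis comp_apply id_outside_supp)
  qed
  then show ?thesis using that[OF L \<tau>] by blast
qed

lemma card_eq_length_add_card_Diff:
  assumes "distinct L" "set L \<subseteq> S" "finite S"
  shows "card S = length L + card (S - set L)"
proof -
  have "length L \<le> card S" using card_mono[OF assms(3,2)] assms(1) by (simp add: distinct_card)
  then show ?thesis using card_Diff_subset[OF _ assms(2)] assms(1) by (simp add: distinct_card)
qed

lemma sum_mset_cycle_type_on:
  assumes "\<sigma> permutes S" "finite S"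
  shows "sum_mset (cycle_type_on S \<sigma>) = card S"
  using assms(2,1)
proof (induction S arbitrary: \<sigma> rule: finite_psubset_induct)
  case (psubset S)
  show ?case
  proof (cases "S = {}")
    case False
    then obtain x where x: "x \<in> S" by blast
    obtain L \<tau> where L: "distinct L" "L \<noteq> []" "hd L = x" "set L \<subseteq> S"
      and \<tau>: "\<tau> permutes (S - set L)" and \<sigma>: "\<sigma> = cycle_of_list L \<circ> \<tau>"
      using permutes_split_cycle[OF psubset.prems psubset.hyps x] .
    have "x \<in> set L" using L(2,3) by auto
    then have IH: "sum_mset (cycle_type_on (S - set L) \<tau>) = card (S - set L)"
      using psubset.IH[OF _ \<tau>] x by blast
    have "set L \<union> (S - set L) = S" using L(4) by blast
    then have "cycle_type_on S \<sigma> = add_mset (length L) (cycle_type_on (S - set L) \<tau>)"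
      using cycle_type_on_cycle_of_list_comp[OF L(1,2) \<tau>] psubset.hyps \<sigma> by auto
    then show ?thesis using IH card_eq_length_add_card_Diff[OF L(1,4) psubset.hyps] by simp
  qed (simp add: cycle_type_on_def)
qed

section \<open>Counting permutations of a given cycle type\<close>

lemma bij_betw_split_cycle:
  assumes "finite S" "x \<in> S"
  shows "bij_betw (\<lambda>(L, \<tau>). cycle_of_list L \<circ> \<tau>)
    (SIGMA L:{L. distinct L \<and> L \<noteq> [] \<and> hd L = x \<and> set L \<subseteq> S \<and> length L \<in># \<mu>}.
       {\<tau>. \<tau> permutes (S - set L) \<and> cycle_type_on (S - set L) \<tau> = \<mu> - {#length L#}})
    {\<sigma>. \<sigma> permutes S \<and> cycle_type_on S \<sigma> = \<mu>}"
  (is "bij_betw ?f ?X ?Y")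
proof (rule bij_betwI')
  fix p q assume "p \<in> ?X" "q \<in> ?X"
  then obtain L1 \<tau>1 L2 \<tau>2 where pq: "p = (L1, \<tau>1)" "q = (L2, \<tau>2)"
    and "distinct L1" "L1 \<noteq> []" "hd L1 = x" "\<tau>1 permutes (S - set L1)"
    and "distinct L2" "L2 \<noteq> []" "hd L2 = x" "\<tau>2 permutes (S - set L2)"
    by auto
  then show "(?f p = ?f q) = (p = q)"
    using cycle_of_list_comp_inj[of L1 \<tau>1 "S - set L1" L2 \<tau>2 "S - set L2"] by auto
next
  fix p assume "p \<in> ?X"
  then obtain L \<tau> where p: "p = (L, \<tau>)"
    and L: "distinct L" "L \<noteq> []" "set L \<subseteq> S" "length L \<in># \<mu>"
    and \<tau>: "\<tau> permutes (S - set L)" "cycle_type_on (S - set L) \<tau> = \<mu> - {#length L#}"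
    by auto
  have S: "set L \<union> (S - set L) = S" using L(3) by blast
  have "cycle_of_list L \<circ> \<tau> permutes S"
    using permutes_cycle_of_list_comp[OF \<tau>(1), of L] S by (simp add: Int_Diff)
  moreover have "cycle_type_on S (cycle_of_list L \<circ> \<tau>) = \<mu>"
    using cycle_type_on_cycle_of_list_comp[OF L(1,2) \<tau>(1)] S \<tau>(2) L(4) assms(1) by auto
  ultimately show "?f p \<in> ?Y" using p by simp
next
  fix \<sigma> assume "\<sigma> \<in> ?Y"
  then have \<sigma>: "\<sigma> permutes S" "cycle_type_on S \<sigma> = \<mu>" by auto
  obtain L \<tau> where L: "distinct L" "L \<noteq> []" "hd L = x" "set L \<subseteq> S"
    and \<tau>: "\<tau> permutes (S - set L)" and \<sigma>_eq: "\<sigma> = cycle_of_list L \<circ> \<tau>"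
    using permutes_split_cycle[OF \<sigma>(1) assms] .
  have "set L \<union> (S - set L) = S" using L(4) by blast
  then have "\<mu> = add_mset (length L) (cycle_type_on (S - set L) \<tau>)"
    using cycle_type_on_cycle_of_list_comp[OF L(1,2) \<tau>] assms(1) \<sigma>_eq \<sigma>(2) by auto
  then have "(L, \<tau>) \<in> ?X" using L \<tau> by auto
  then show "\<exists>p\<in>?X. \<sigma> = ?f p" using \<sigma>_eq by force
qed

lemma card_permutes_cycle_type_on_split:
  assumes "finite S" "x \<in> S"
  shows "card {\<sigma>. \<sigma> permutes S \<and> cycle_type_on S \<sigma> = \<mu>} =
    (\<Sum>L\<in>{L. distinct L \<and> L \<noteq> [] \<and> hd L = x \<and> set L \<subseteq> S \<and> length L \<in># \<mu>}.
      card {\<tau>. \<tau> permutes (S - set L) \<and> cycle_type_on (S - set L) \<tau> = \<mu> - {#length L#}})"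
proof -
  have "{L. distinct L \<and> L \<noteq> [] \<and> hd L = x \<and> set L \<subseteq> S \<and> length L \<in># \<mu>}
      \<subseteq> {L. set L \<subseteq> S \<and> distinct L}" by auto
  then have "finite {L. distinct L \<and> L \<noteq> [] \<and> hd L = x \<and> set L \<subseteq> S \<and> length L \<in># \<mu>}"
    by (rule finite_subset) (rule finite_subset_distinct[OF assms(1)])
  moreover have "finite {\<tau>. \<tau> permutes (S - set L) \<and> cycle_type_on (S - set L) \<tau> = \<nu>}" for L \<nu>
    by (rule finite_subset[of _ "{\<tau>. \<tau> permutes (S - set L)}"]) (auto simp: finite_permutations assms(1))
  ultimately show ?thesis
    using bij_betw_same_card[OF bij_betw_split_cycle[OF assms, of \<mu>]] by simp
qed

lemma zee_eq_prod_superset: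
  assumes "finite A" "set_mset \<mu> \<subseteq> A"
  shows "zee \<mu> = (\<Prod>i\<in>A. of_nat (i ^ count \<mu> i * fact (count \<mu> i)))"
  unfolding zee_def by (rule prod.mono_neutral_left) (use assms in \<open>auto simp: not_in_iff\<close>)

lemma zee_add_mset: "zee (add_mset k \<mu>) = zee \<mu> * of_nat (k * Suc (count \<mu> k))"
proof -
  let ?A = "set_mset (add_mset k \<mu>)"
  let ?f = "\<lambda>\<nu> i. of_nat (i ^ count \<nu> i * fact (count \<nu> i)) :: rat"
  have k: "k \<in> ?A" by simp
  have "zee (add_mset k \<mu>) = ?f (add_mset k \<mu>) k * (\<Prod>i\<in>?A - {k}. ?f (add_mset k \<mu>) i)"
    unfolding zee_def by (rule prod.remove[OF _ k]) simp
  also have "(\<Prod>i\<in>?A - {k}. ?f (add_mset k \<mu>) i) = (\<Prod>i\<in>?A - {k}. ?f \<mu> i)"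
    by (rule prod.cong) auto
  also have "?f (add_mset k \<mu>) k = ?f \<mu> k * of_nat (k * Suc (count \<mu> k))"
    by (simp add: algebra_simps)
  also have "zee \<mu> = ?f \<mu> k * (\<Prod>i\<in>?A - {k}. ?f \<mu> i)"
    using zee_eq_prod_superset[of ?A \<mu>] prod.remove[OF _ k, of "?f \<mu>"] by auto
  ultimately show ?thesis by (simp add: algebra_simps)
qed

lemma zee_nonzero: "0 \<notin># \<mu> \<Longrightarrow> zee \<mu> \<noteq> 0"
  unfolding zee_def by (auto simp: prod_zero_iff)

lemma sum_mset_eq_sum_count:
  fixes M :: "nat multiset"
  assumes "finite A" "set_mset M \<subseteq> A"
  shows "sum_mset M = (\<Sum>k\<in>A. k * count M k)"
  using assms(2)
proof (induction M)
  case (add a M)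
  have "(\<Sum>k\<in>A. k * count (add_mset a M) k) = (\<Sum>k\<in>A. k * count M k + (if k = a then a else 0))"
    by (rule sum.cong) auto
  also have "\<dots> = (\<Sum>k\<in>A. k * count M k) + a"
    using add.prems assms(1) by (simp add: sum.distrib)
  finally show ?case using add by simp
qed simp

lemma card_distinct_lists_hd:
  assumes "finite S" "x \<in> S" "0 < k" "k \<le> card S"
  shows "card {L. distinct L \<and> L \<noteq> [] \<and> hd L = x \<and> set L \<subseteq> S \<and> length L = k} * fact (card S - k)
    = fact (card S - 1)"
proof -
  have "{L. distinct L \<and> L \<noteq> [] \<and> hd L = x \<and> set L \<subseteq> S \<and> length L = k}
      = (#) x ` {xs. length xs = k - 1 \<and> distinct xs \<and> set xs \<subseteq> S - {x}}"
  proof (intro set_eqI iffI)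
    fix L assume "L \<in> {L. distinct L \<and> L \<noteq> [] \<and> hd L = x \<and> set L \<subseteq> S \<and> length L = k}"
    then show "L \<in> (#) x ` {xs. length xs = k - 1 \<and> distinct xs \<and> set xs \<subseteq> S - {x}}"
      by (cases L) auto
  qed (use assms(2,3) in auto)
  then have "card {L. distinct L \<and> L \<noteq> [] \<and> hd L = x \<and> set L \<subseteq> S \<and> length L = k}
      = \<Prod>{card S - k + 1 .. card S - 1}"
    using card_lists_distinct_length_eq[of "S - {x}" "k - 1"] assms by (simp add: card_image)
  moreover have "fact (card S - k) * \<Prod>{card S - k + 1 .. card S - 1} = (fact (card S - 1) :: nat)"
  proof -
    have le: "card S - k \<le> card S - 1" using assms(3) by simp
    show ?thesis
      using fact_div_fact[OF le] dvd_mult_div_cancel[OF fact_dvd[OF le, where 'a=nat]] by simp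
  qed
  ultimately show ?thesis by (simp add: mult.commute)
qed

lemma sum_cycles_through_fact:
  assumes "finite S" "x \<in> S" "0 \<notin># \<mu>" "sum_mset \<mu> = card S"
  shows "(\<Sum>L\<in>{L. distinct L \<and> L \<noteq> [] \<and> hd L = x \<and> set L \<subseteq> S \<and> length L \<in># \<mu>}.
      fact (card S - length L) * of_nat (length L * count \<mu> (length L))) = (fact (card S) :: rat)"
proof -
  define s where "s = card S"
  define C where "C = {L. distinct L \<and> L \<noteq> [] \<and> hd L = x \<and> set L \<subseteq> S \<and> length L \<in># \<mu>}"
  have "C \<subseteq> {L. set L \<subseteq> S \<and> distinct L}" by (auto simp: C_def)
  then have finC: "finite C" by (rule finite_subset) (rule finite_subset_distinct[OF assms(1)])
  have card_C: "of_nat (card {L \<in> C. length L = k}) * fact (s - k) = (fact (s - 1) :: rat)"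
    if k: "k \<in># \<mu>" for k
  proof -
    have "0 < k \<and> k \<le> s" using k assms(3,4) sum_mset.remove[OF k] by (auto simp: s_def intro: gr0I)
    moreover have "{L \<in> C. length L = k} =
        {L. distinct L \<and> L \<noteq> [] \<and> hd L = x \<and> set L \<subseteq> S \<and> length L = k}"
      using k by (auto simp: C_def)
    ultimately have "card {L \<in> C. length L = k} * fact (s - k) = (fact (s - 1) :: nat)"
      using card_distinct_lists_hd[OF assms(1,2), of k] by (simp add: s_def)
    then have "(of_nat (card {L \<in> C. length L = k} * fact (s - k)) :: rat) = of_nat (fact (s - 1))"
      by (rule arg_cong)
    then show ?thesis by (simp only: of_nat_mult of_nat_fact)
  qed
  have "(\<Sum>L\<in>C. fact (s - length L) * of_nat (length L * count \<mu> (length L)) :: rat)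
      = (\<Sum>k\<in>set_mset \<mu>. \<Sum>L\<in>{L \<in> C. length L = k}.
          fact (s - length L) * of_nat (length L * count \<mu> (length L)))"
    by (rule sum.group[symmetric]) (use finC in \<open>auto simp: C_def\<close>)
  also have "\<dots> = (\<Sum>k\<in>set_mset \<mu>.
      of_nat (card {L \<in> C. length L = k}) * fact (s - k) * of_nat (k * count \<mu> k))"
    by (rule sum.cong[OF refl]) (simp add: mult.assoc)
  also have "\<dots> = (\<Sum>k\<in>set_mset \<mu>. fact (s - 1) * of_nat (k * count \<mu> k))"
    using card_C by simp
  also have "\<dots> = fact (s - 1) * of_nat (\<Sum>k\<in>set_mset \<mu>. k * count \<mu> k)"
    unfolding of_nat_sum sum_distrib_left by simp
  also have "\<dots> = fact (s - 1) * of_nat s"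
    using sum_mset_eq_sum_count[of "set_mset \<mu>" \<mu>] assms(4) by (simp add: s_def)
  also have "\<dots> = fact s"
  proof -
    have "0 < s" using assms(1,2) by (auto simp: s_def card_gt_0_iff)
    then show ?thesis by (simp add: fact_reduce[of s] mult.commute)
  qed
  finally show ?thesis by (simp add: C_def s_def)
qed

lemma card_permutes_cycle_type_on:
  assumes "finite S" "0 \<notin># \<mu>" "sum_mset \<mu> = card S"
  shows "of_nat (card {\<sigma>. \<sigma> permutes S \<and> cycle_type_on S \<sigma> = \<mu>}) * zee \<mu> = (fact (card S) :: rat)"
  using assms
proof (induction S arbitrary: \<mu> rule: finite_psubset_induct)
  case (psubset S)
  show ?case
  proof (cases "S = {}")
    case True
    then have "\<mu> = {#}" using psubset.prems by (cases \<mu>) (auto simp: sum_mset_0_iff)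
    then show ?thesis using True by (simp add: zee_def cycle_type_on_def)
  next
    case False
    then obtain x where x: "x \<in> S" by blast
    define C where "C = {L. distinct L \<and> L \<noteq> [] \<and> hd L = x \<and> set L \<subseteq> S \<and> length L \<in># \<mu>}"
    define R where "R L = {\<tau>. \<tau> permutes (S - set L) \<and> cycle_type_on (S - set L) \<tau> = \<mu> - {#length L#}}"
      for L
    have card_eq: "card {\<sigma>. \<sigma> permutes S \<and> cycle_type_on S \<sigma> = \<mu>} = (\<Sum>L\<in>C. card (R L))"
      using card_permutes_cycle_type_on_split[OF psubset.hyps x] by (simp add: C_def R_def)
    have card_R: "of_nat (card (R L)) * zee \<mu>
        = fact (card S - length L) * of_nat (length L * count \<mu> (length L))" if "L \<in> C" for L
    proof -
      have L: "distinct L" "L \<noteq> []" "hd L = x" "set L \<subseteq> S" "length L \<in># \<mu>"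
        using that by (auto simp: C_def)
      have card_rest: "card (S - set L) = card S - length L"
        using card_eq_length_add_card_Diff[OF L(1,4) psubset.hyps] by simp
      have "sum_mset (\<mu> - {#length L#}) = card (S - set L)"
        using psubset.prems(2) card_rest L(5) by (simp add: sum_mset.remove)
      moreover have "x \<in> set L" using L(2,3) by auto
      then have "S - set L \<subset> S" using x by blast
      moreover have "0 \<notin># \<mu> - {#length L#}" using psubset.prems(1) by (meson in_diffD)
      ultimately have IH: "of_nat (card (R L)) * zee (\<mu> - {#length L#}) = fact (card S - length L)"
        using psubset.IH[of "S - set L" "\<mu> - {#length L#}"] card_rest by (simp add: R_def)
      have "zee \<mu> = zee (\<mu> - {#length L#}) * of_nat (length L * count \<mu> (length L))"
        using zee_add_mset[of "length L" "\<mu> - {#length L#}"] L(5) by (simp add: insert_DiffM)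
      then show ?thesis using IH by (simp add: mult.assoc[symmetric])
    qed
    have "of_nat (card {\<sigma>. \<sigma> permutes S \<and> cycle_type_on S \<sigma> = \<mu>}) * zee \<mu>
        = (\<Sum>L\<in>C. fact (card S - length L) * of_nat (length L * count \<mu> (length L)))"
      unfolding card_eq of_nat_sum sum_distrib_right using card_R by simp
    then show ?thesis using sum_cycles_through_fact[OF psubset.hyps x psubset.prems] by (simp add: C_def)
  qed
qed

section \<open>The cycle lemma for parking functions\<close>

definition count_le :: "nat list \<Rightarrow> nat \<Rightarrow> nat" where
  "count_le a t = card {i. i < length a \<and> a ! i \<le> t}"

lemma sorted_nth_le_iff_count_le:
  assumes "sorted s" "i < length s"
  shows "s ! i \<le> v \<longleftrightarrow> Suc i \<le> count_le s v"
proof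
  assume i: "s ! i \<le> v"
  have "{..i} \<subseteq> {t. t < length s \<and> s ! t \<le> v}"
  proof
    fix t assume "t \<in> {..i}"
    then have "t < length s" "s ! t \<le> s ! i" using assms sorted_nth_mono[OF assms(1)] by auto
    then show "t \<in> {t. t < length s \<and> s ! t \<le> v}" using i by simp
  qed
  from card_mono[OF _ this] show "Suc i \<le> count_le s v" by (simp add: count_le_def)
next
  assume card: "Suc i \<le> count_le s v"
  show "s ! i \<le> v"
  proof (rule ccontr)
    assume i: "\<not> s ! i \<le> v"
    have "{t. t < length s \<and> s ! t \<le> v} \<subseteq> {..<i}"
    proof
      fix t assume t: "t \<in> {t. t < length s \<and> s ! t \<le> v}"
      then have "\<not> i \<le> t" using i sorted_nth_mono[OF assms(1), of i t] by auto
      then show "t \<in> {..<i}" by simp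
    qed
    from card_mono[OF _ this] card show False by (simp add: count_le_def)
  qed
qed

lemma count_le_sort: "count_le (sort a) v = count_le a v"
proof -
  have "count_le (sort a) v = length (filter (\<lambda>u. u \<le> v) (sort a))"
    by (simp add: count_le_def length_filter_conv_card)
  also have "\<dots> = length (filter (\<lambda>u. u \<le> v) a)" by (simp add: filter_sort)
  finally show ?thesis by (simp add: count_le_def length_filter_conv_card)
qed

lemma count_le_0: "set x \<subseteq> {1..m} \<Longrightarrow> count_le x 0 = 0"
  by (auto simp: count_le_def dest!: nth_mem)

lemma count_le_eq_length:
  assumes "set x \<subseteq> {1..m}" "m \<le> t"
  shows "count_le x t = length x"
proof -
  have "x ! i \<le> t" if "i < length x" for i using assms nth_mem[OF that] by auto
  then have "{i. i < length x \<and> x ! i \<le> t} = {..<length x}" by auto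
  then show ?thesis by (simp add: count_le_def)
qed

lemma parking_function_iff_count_le:
  "parking_function a \<longleftrightarrow>
    (\<forall>v\<in>set a. 1 \<le> v) \<and> (\<forall>j. 0 < j \<and> j \<le> length a \<longrightarrow> j \<le> count_le a j)"
proof -
  have "(\<forall>i<length a. sort a ! i \<le> i + 1) \<longleftrightarrow> (\<forall>j. 0 < j \<and> j \<le> length a \<longrightarrow> j \<le> count_le a j)"
  proof (intro iffI allI impI)
    fix j assume sorted: "\<forall>i<length a. sort a ! i \<le> i + 1" and j: "0 < j \<and> j \<le> length a"
    have "j - 1 < length (sort a)" using j by auto
    moreover have "sort a ! (j - 1) \<le> j" using sorted[rule_format, of "j - 1"] j by auto
    ultimately show "j \<le> count_le a j"
      using sorted_nth_le_iff_count_le[of "sort a" "j - 1" j] count_le_sort[of a j] by simp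
  next
    fix i assume "\<forall>j. 0 < j \<and> j \<le> length a \<longrightarrow> j \<le> count_le a j" "i < length a"
    then show "sort a ! i \<le> i + 1"
      using sorted_nth_le_iff_count_le[of "sort a" i "Suc i"] count_le_sort[of a "Suc i"] by simp
  qed
  moreover have "(\<forall>i<length a. 1 \<le> sort a ! i) \<longleftrightarrow> (\<forall>v\<in>set a. 1 \<le> v)"
    using all_set_conv_all_nth[of "sort a" "\<lambda>v. 1 \<le> v"] by simp
  ultimately show ?thesis unfolding parking_function_def by auto
qed

lemma set_parking_function:
  assumes "parking_function a"
  shows "set a \<subseteq> {1..length a + 1}"
proof
  fix v assume "v \<in> set a"
  then obtain i where "i < length a" "v = sort a ! i" by (metis in_set_conv_nth length_sort set_sort)
  then show "v \<in> {1..length a + 1}" using assms by (auto simp: parking_function_def)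
qed

definition shift_values :: "nat \<Rightarrow> nat \<Rightarrow> nat list \<Rightarrow> nat list" where
  "shift_values m s a = map (\<lambda>v. (v - 1 + s) mod m + 1) a"

lemma length_shift_values [simp]: "length (shift_values m s a) = length a"
  by (simp add: shift_values_def)

lemma set_shift_values: "0 < m \<Longrightarrow> set (shift_values m s a) \<subseteq> {1..m}"
  by (auto simp: shift_values_def Suc_le_eq)

lemma shift_values_0: "set a \<subseteq> {1..m} \<Longrightarrow> shift_values m 0 a = a"
  by (auto simp: shift_values_def subset_iff intro!: map_idI)

lemma shift_values_shift_values:
  "shift_values m t (shift_values m s a) = shift_values m ((s + t) mod m) a"
  by (simp add: shift_values_def mod_add_left_eq mod_add_right_eq add.assoc)

lemma shift_values_inverse:
  assumes "set a \<subseteq> {1..m}" "s < m"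
  shows "shift_values m ((m - s) mod m) (shift_values m s a) = a"
proof -
  have "(s + (m - s) mod m) mod m = 0" using assms(2) by (cases "s = 0") auto
  then show ?thesis using shift_values_0[OF assms(1)] by (simp add: shift_values_shift_values)
qed

lemma mod_add_neg_mod:
  fixes y r m :: nat
  assumes "y < m" "r < m"
  shows "(y + (m - r) mod m) mod m = (if r \<le> y then y - r else y + m - r)"
proof (cases "r = 0")
  case False
  then have "(y + (m - r) mod m) mod m = (y + (m - r)) mod m" using assms(2) by simp
  also have "\<dots> = (if r \<le> y then y - r else y + m - r)"
  proof (cases "r \<le> y")
    case True
    then have "y + (m - r) = (y - r) + m" using assms(2) by simp
    moreover have "y - r < m" using assms(1) by linarith
    ultimately show ?thesis using True by (metis mod_add_self2 mod_less)
  next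
    case False
    then have "y + (m - r) < m" using assms(2) by linarith
    then show ?thesis using False assms(2) by simp
  qed
  finally show ?thesis .
qed (use assms in simp)

lemma count_le_shift_values:
  assumes "set x \<subseteq> {1..m}" "r < m" "j \<le> m"
  shows "count_le (shift_values m ((m - r) mod m) x) j =
    count_le x (r + j) - count_le x r + count_le x (r + j - m)"
proof -
  let ?I = "\<lambda>t. {i. i < length x \<and> x ! i \<le> t}"
  have shifted_le: "shift_values m ((m - r) mod m) x ! i \<le> j \<longleftrightarrow>
      i \<in> ?I (r + j) - ?I r \<union> ?I (r + j - m)" if i: "i < length x" for i
  proof -
    have x: "1 \<le> x ! i" "x ! i \<le> m" using assms(1) i by (auto dest: nth_mem)
    then have "shift_values m ((m - r) mod m) x ! i =
        (if r \<le> x ! i - 1 then x ! i - 1 - r else x ! i - 1 + m - r) + 1"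
      using mod_add_neg_mod[of "x ! i - 1" m r] i assms(2) by (simp add: shift_values_def)
    then show ?thesis using i x assms(2,3) by (cases "m \<le> r + j") auto
  qed
  have "count_le (shift_values m ((m - r) mod m) x) j = card (?I (r + j) - ?I r \<union> ?I (r + j - m))"
    unfolding count_le_def using shifted_le by (intro arg_cong[where f = card]) auto
  also have "\<dots> = card (?I (r + j) - ?I r) + card (?I (r + j - m))"
    by (rule card_Un_disjoint) (use assms(3) in auto)
  also have "card (?I (r + j) - ?I r) = card (?I (r + j)) - card (?I r)"
    by (rule card_Diff_subset) auto
  finally show ?thesis unfolding count_le_def .
qed

lemma parking_function_shift_values_iff:
  assumes "set x \<subseteq> {1..m}" "length x + 1 = m" "r < m"
  shows "parking_function (shift_values m ((m - r) mod m) x) \<longleftrightarrow>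
    (\<forall>j. 0 < j \<and> j < m \<longrightarrow>
      int (count_le x r) + int j \<le> int (count_le x (r + j)) + int (count_le x (r + j - m)))"
proof -
  have mono: "count_le x r \<le> count_le x (r + j)" for j
    unfolding count_le_def by (rule card_mono) auto
  have "\<forall>v\<in>set (shift_values m ((m - r) mod m) x). 1 \<le> v"
    using set_shift_values[of m] assms(3) by fastforce
  then have "parking_function (shift_values m ((m - r) mod m) x) \<longleftrightarrow>
      (\<forall>j. 0 < j \<and> j < m \<longrightarrow> j \<le> count_le (shift_values m ((m - r) mod m) x) j)"
    using assms(2) by (auto simp: parking_function_iff_count_le)
  also have "\<dots> \<longleftrightarrow> (\<forall>j. 0 < j \<and> j < m \<longrightarrow>
      int (count_le x r) + int j \<le> int (count_le x (r + j)) + int (count_le x (r + j - m)))"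
    using count_le_shift_values[OF assms(1,3)] mono by (auto simp: of_nat_diff)
  finally show ?thesis .
qed

lemma ex1_cyclic_minimum:
  fixes D :: "nat \<Rightarrow> int"
  assumes m: "0 < m" and period: "\<And>t. t \<le> m \<Longrightarrow> D (t + m) = D t - 1"
  shows "\<exists>!r. r < m \<and> (\<forall>j. 0 < j \<and> j < m \<longrightarrow> D r \<le> D (r + j))"
proof -
  define M where "M = Min (D ` {..<m})"
  have M_le: "t < m \<Longrightarrow> M \<le> D t" for t unfolding M_def by simp
  have "M \<in> D ` {..<m}" unfolding M_def using m by (intro Min_in) auto
  then have "\<exists>r. r < m \<and> D r = M" by auto
  define r where "r = (LEAST r. r < m \<and> D r = M)"
  have r: "r < m" "D r = M" using LeastI_ex[OF \<open>\<exists>r. r < m \<and> D r = M\<close>] by (simp_all add: r_def)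
  have before: "D r < D t" if "t < r" for t
    using not_less_Least[OF that[unfolded r_def]] that r M_le[of t] by fastforce
  have good: "\<forall>j. 0 < j \<and> j < m \<longrightarrow> D r \<le> D (r + j)"
  proof (intro allI impI)
    fix j assume j: "0 < j \<and> j < m"
    show "D r \<le> D (r + j)"
    proof (cases "r + j < m")
      case False
      then have "D (r + j) = D (r + j - m) - 1" using period[of "r + j - m"] r(1) j by simp
      moreover have "r + j - m < r" using False j by linarith
      ultimately show ?thesis using before[of "r + j - m"] by simp
    qed (use M_le r in simp)
  qed
  have not_two: False
    if "a < b" "b < m" "\<forall>j. 0 < j \<and> j < m \<longrightarrow> D a \<le> D (a + j)"
      "\<forall>j. 0 < j \<and> j < m \<longrightarrow> D b \<le> D (b + j)" for a b
  proof -
    have "D a \<le> D b" using that(3)[rule_format, of "b - a"] that(1,2) by simp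
    moreover have "D b \<le> D (a + m)" using that(4)[rule_format, of "a + m - b"] that(1,2) by simp
    ultimately show False using period[of a] that(1,2) by simp
  qed
  show ?thesis
  proof (rule ex1I[of _ r])
    fix r' assume "r' < m \<and> (\<forall>j. 0 < j \<and> j < m \<longrightarrow> D r' \<le> D (r' + j))"
    then show "r' = r" using not_two[of r r'] not_two[of r' r] r(1) good by (metis linorder_neqE_nat)
  qed (use r(1) good in simp)
qed

lemma diff_mod_diff_mod:
  fixes m s :: nat
  shows "s < m \<Longrightarrow> (m - (m - s) mod m) mod m = s"
  by (cases "s = 0") auto

lemma ex1_reindex_neg_mod:
  fixes m :: nat
  assumes "\<exists>!r. r < m \<and> P ((m - r) mod m)" "0 < m"
  shows "\<exists>!s. s < m \<and> P s"
proof -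
  note involution = diff_mod_diff_mod[of _ m]
  obtain r where r: "r < m" "P ((m - r) mod m)"
    and unique: "\<And>r'. r' < m \<Longrightarrow> P ((m - r') mod m) \<Longrightarrow> r' = r"
    using assms(1) by blast
  show ?thesis
  proof (rule ex1I[of _ "(m - r) mod m"])
    fix s assume s: "s < m \<and> P s"
    then have "(m - s) mod m = r" using unique[of "(m - s) mod m"] involution[of s] assms(2) by simp
    then show "s = (m - r) mod m" using involution[of s] s by simp
  qed (use r assms(2) in simp)
qed

lemma ex1_shift_values_parking_function:
  assumes "set x \<subseteq> {1..length x + 1}"
  shows "\<exists>!s. s < length x + 1 \<and> parking_function (shift_values (length x + 1) s x)"
proof -
  define m where "m = length x + 1"
  \<comment> \<open>As \<open>t - m\<close> truncates to 0, \<open>D\<close> continues \<open>count_le x t - t\<close> beyond \<open>m\<close>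
    with \<open>D (t + m) = D t - 1\<close>; shifting the values by \<open>m - r\<close> yields a parking function
    iff \<open>r\<close> is a cyclic minimum of \<open>D\<close>.\<close>
  define D where "D t = int (count_le x t) + int (count_le x (t - m)) - int t" for t
  have count_le_full: "count_le x t = length x" if "m \<le> t" for t
    using assms that by (intro count_le_eq_length) (auto simp: m_def)
  have D_small: "D t = int (count_le x t) - int t" if "t \<le> m" for t
    using that count_le_0[OF assms] by (simp add: D_def)
  have "\<exists>!r. r < m \<and> (\<forall>j. 0 < j \<and> j < m \<longrightarrow> D r \<le> D (r + j))"
  proof (rule ex1_cyclic_minimum)
    fix t assume "t \<le> m"
    then show "D (t + m) = D t - 1"
      using D_small count_le_full[of "t + m"] by (simp add: D_def m_def)
  qed (simp add: m_def)
  moreover have "parking_function (shift_values m ((m - r) mod m) x) \<longleftrightarrow>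
      (\<forall>j. 0 < j \<and> j < m \<longrightarrow> D r \<le> D (r + j))" if "r < m" for r
  proof -
    have "D r \<le> D (r + j) \<longleftrightarrow>
        int (count_le x r) + int j \<le> int (count_le x (r + j)) + int (count_le x (r + j - m))" for j
      using D_small[of r] that by (simp add: D_def, linarith)
    then show ?thesis
      using parking_function_shift_values_iff[OF assms[folded m_def] m_def[symmetric] that] by simp
  qed
  ultimately have "\<exists>!r. r < m \<and> parking_function (shift_values m ((m - r) mod m) x)" by auto
  then have "\<exists>!s. s < m \<and> parking_function (shift_values m s x)"
    by (rule ex1_reindex_neg_mod) (simp add: m_def)
  then show ?thesis by (simp add: m_def)
qed

lemma shift_values_parking_function_inj:
  assumes "parking_function a" "parking_function a'" "length a' = length a"
    and "s < length a + 1" "s' < length a + 1"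
    and "shift_values (length a + 1) s a = shift_values (length a + 1) s' a'"
  shows "s = s' \<and> a = a'"
proof -
  define m where "m = length a + 1"
  define x where "x = shift_values m s a"
  have "set a \<subseteq> {1..m}" "set a' \<subseteq> {1..m}"
    using set_parking_function assms(1-3) by (fastforce simp: m_def)+
  then have inverse: "shift_values m ((m - s) mod m) x = a" "shift_values m ((m - s') mod m) x = a'"
    using shift_values_inverse[of a m s] shift_values_inverse[of a' m s'] assms(4-6)
    by (simp_all add: x_def m_def)
  have "set x \<subseteq> {1..length x + 1}" using set_shift_values[of m s a] by (simp add: x_def m_def)
  then obtain w where w: "\<And>t. t < m \<Longrightarrow> parking_function (shift_values m t x) \<Longrightarrow> t = w"
    using ex1_shift_values_parking_function[of x] by (auto simp: x_def m_def)
  have "(m - s) mod m = (m - s') mod m"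
    using w[of "(m - s) mod m"] w[of "(m - s') mod m"] inverse assms(1,2) by (simp add: m_def)
  then have "s = s'" using diff_mod_diff_mod[of s m] diff_mod_diff_mod[of s' m] assms(4,5) by (metis m_def)
  then show ?thesis using inverse by simp
qed

section \<open>Parking functions fixed by a permutation\<close>

lemma length_perm_act [simp]: "length (perm_act \<sigma> a) = length a"
  by (simp add: perm_act_def)

lemma nth_perm_act: "i < length a \<Longrightarrow> perm_act \<sigma> a ! i = a ! inv \<sigma> i"
  by (simp add: perm_act_def)

lemma perm_act_fixed_iff:
  assumes "\<sigma> permutes {..<length a}"
  shows "perm_act \<sigma> a = a \<longleftrightarrow> (\<forall>i<length a. a ! \<sigma> i = a ! i)"
proof -
  have "perm_act \<sigma> a = a \<longleftrightarrow> (\<forall>i<length a. a ! inv \<sigma> i = a ! i)"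
    by (auto simp: list_eq_iff_nth_eq nth_perm_act)
  also have "\<dots> \<longleftrightarrow> (\<forall>i<length a. a ! \<sigma> i = a ! i)"
  proof -
    have "(\<forall>i<length a. a ! inv \<sigma> i = a ! i) \<longleftrightarrow> (\<forall>j<length a. a ! inv \<sigma> (\<sigma> j) = a ! \<sigma> j)"
      using permutes_surj[OF assms] permutes_in_image[OF assms] by (metis lessThan_iff surj_f_inv_f)
    then show ?thesis using permutes_inverses(2)[OF assms] by (metis)
  qed
  finally show ?thesis .
qed

lemma perm_act_fixed_iff_orbit:
  assumes "\<sigma> permutes {..<length a}"
  shows "perm_act \<sigma> a = a \<longleftrightarrow> (\<forall>i<length a. \<forall>j\<in>orbit \<sigma> i. a ! j = a ! i)"
proof
  assume fixed: "perm_act \<sigma> a = a"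
  show "\<forall>i<length a. \<forall>j\<in>orbit \<sigma> i. a ! j = a ! i"
  proof (intro allI impI ballI)
    fix i j assume i: "i < length a" and j: "j \<in> orbit \<sigma> i"
    from j show "a ! j = a ! i"
    proof (induction rule: orbit.induct)
      case base then show ?case using fixed i by (simp add: perm_act_fixed_iff[OF assms])
    next
      case (step y)
      have "y < length a" using permutes_orbit_subset[OF assms] step.hyps i by blast
      then show ?case using fixed step.IH i by (simp add: perm_act_fixed_iff[OF assms])
    qed
  qed
next
  assume "\<forall>i<length a. \<forall>j\<in>orbit \<sigma> i. a ! j = a ! i"
  then show "perm_act \<sigma> a = a" by (simp add: perm_act_fixed_iff[OF assms] orbit.base)
qed

lemma card_fixed_lists:
  assumes \<sigma>: "\<sigma> permutes {..<n}"
  shows "card {a. length a = n \<and> set a \<subseteq> V \<and> perm_act \<sigma> a = a} = card V ^ card (orbit \<sigma> ` {..<n})"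
proof -
  let ?O = "orbit \<sigma> ` {..<n}"
  let ?\<Psi> = "\<lambda>f. map (\<lambda>i. f (orbit \<sigma> i)) [0..<n]"
  have perm: "permutation \<sigma>" using \<sigma> by (auto simp: permutation_permutes)
  have "bij_betw ?\<Psi> (PiE ?O (\<lambda>_. V)) {a. length a = n \<and> set a \<subseteq> V \<and> perm_act \<sigma> a = a}"
  proof (rule bij_betwI')
    fix f g assume f: "f \<in> PiE ?O (\<lambda>_. V)" and g: "g \<in> PiE ?O (\<lambda>_. V)"
    have "f = g" if "?\<Psi> f = ?\<Psi> g"
    proof (rule PiE_ext[OF f g])
      fix c assume "c \<in> ?O"
      then obtain i where "i < n" "c = orbit \<sigma> i" by auto
      then show "f c = g c" using arg_cong[OF that, of "\<lambda>a. a ! i"] by simp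
    qed
    then show "(?\<Psi> f = ?\<Psi> g) = (f = g)" by auto
  next
    fix f assume f: "f \<in> PiE ?O (\<lambda>_. V)"
    have "?\<Psi> f ! \<sigma> i = ?\<Psi> f ! i" if "i < n" for i
      using that permutes_in_image[OF \<sigma>, of i] by (simp add: permutation_orbit_step[OF perm])
    then show "?\<Psi> f \<in> {a. length a = n \<and> set a \<subseteq> V \<and> perm_act \<sigma> a = a}"
      using f \<sigma> by (auto simp: perm_act_fixed_iff)
  next
    fix a assume "a \<in> {a. length a = n \<and> set a \<subseteq> V \<and> perm_act \<sigma> a = a}"
    then have a: "length a = n" "set a \<subseteq> V" and const: "\<forall>i<n. \<forall>j\<in>orbit \<sigma> i. a ! j = a ! i"
      using perm_act_fixed_iff_orbit[of \<sigma> a] \<sigma> by auto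
    define f where "f = restrict (\<lambda>c. a ! (SOME j. j \<in> c)) ?O"
    have some: "(SOME j. j \<in> orbit \<sigma> i) \<in> orbit \<sigma> i" for i
      by (rule someI[of "\<lambda>j. j \<in> orbit \<sigma> i", OF permutation_self_in_orbit[OF perm]])
    have f_orbit: "f (orbit \<sigma> i) = a ! i" if "i < n" for i
      using that some[of i] const by (auto simp: f_def)
    have "\<forall>c\<in>?O. f c \<in> V" using f_orbit a by auto
    then have "f \<in> PiE ?O (\<lambda>_. V)" by (simp add: PiE_iff f_def)
    moreover have "a = ?\<Psi> f" using a(1) f_orbit by (simp add: list_eq_iff_nth_eq)
    ultimately show "\<exists>f\<in>PiE ?O (\<lambda>_. V). a = ?\<Psi> f" by blast
  qed
  then show ?thesis using bij_betw_same_card card_PiE[of ?O "\<lambda>_. V"] by fastforce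
qed

lemma perm_act_shift_values:
  assumes "\<sigma> permutes {..<length a}"
  shows "perm_act \<sigma> (shift_values m s a) = shift_values m s (perm_act \<sigma> a)"
  using permutes_in_image[OF permutes_inv[OF assms]]
  by (auto simp: list_eq_iff_nth_eq nth_perm_act shift_values_def)

lemma card_fixed_parking_functions_mult:
  assumes \<sigma>: "\<sigma> permutes {..<n}"
  shows "card {a \<in> parking_functions n. perm_act \<sigma> a = a} * (n + 1) =
    card {a. length a = n \<and> set a \<subseteq> {1..n + 1} \<and> perm_act \<sigma> a = a}"
proof -
  define m where "m = n + 1"
  let ?P = "{a \<in> parking_functions n. perm_act \<sigma> a = a}"
  let ?F = "{a. length a = n \<and> set a \<subseteq> {1..m} \<and> perm_act \<sigma> a = a}"
  have shift_in_F: "shift_values m s a \<in> ?F" if "a \<in> ?F" for a s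
    using that set_shift_values[of m s a] perm_act_shift_values[of \<sigma> a m s] \<sigma> by (auto simp: m_def)
  have P_F: "a \<in> ?F" if "a \<in> ?P" for a
    using that set_parking_function[of a] by (auto simp: parking_functions_def m_def)
  have unique: "\<exists>!s. s < m \<and> parking_function (shift_values m s x)" if "x \<in> ?F" for x
    using that ex1_shift_values_parking_function[of x] by (auto simp: m_def)
  have "bij_betw (\<lambda>(a, s). shift_values m s a) (?P \<times> {..<m}) ?F"
  proof (rule bij_betwI')
    fix p q assume "p \<in> ?P \<times> {..<m}" "q \<in> ?P \<times> {..<m}"
    then show "((\<lambda>(a, s). shift_values m s a) p = (\<lambda>(a, s). shift_values m s a) q) = (p = q)"
      using shift_values_parking_function_inj by (auto simp: parking_functions_def m_def)
  next
    fix p assume "p \<in> ?P \<times> {..<m}"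
    then obtain a s where "p = (a, s)" "a \<in> ?P" by auto
    then show "(\<lambda>(a, s). shift_values m s a) p \<in> ?F" using shift_in_F[OF P_F, of a s] by simp
  next
    fix x assume x: "x \<in> ?F"
    then obtain s where s: "s < m" "parking_function (shift_values m s x)" using unique by blast
    then have mem: "(shift_values m s x, (m - s) mod m) \<in> ?P \<times> {..<m}"
      using shift_in_F[OF x, of s] by (auto simp: parking_functions_def m_def)
    have "set x \<subseteq> {1..m}" using x by simp
    then have "shift_values m ((m - s) mod m) (shift_values m s x) = x"
      using s(1) by (rule shift_values_inverse)
    then show "\<exists>p\<in>?P \<times> {..<m}. x = (\<lambda>(a, s). shift_values m s a) p"
      using mem by force
  qed
  then have "card (?P \<times> {..<m}) = card ?F" by (rule bij_betw_same_card)
  then show ?thesis by (simp add: card_cartesian_product m_def)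
qed

lemma card_fixed_parking_functions:
  assumes \<sigma>: "\<sigma> permutes {..<n}" and "0 < n"
  shows "card {a \<in> parking_functions n. perm_act \<sigma> a = a} = (n + 1) ^ (size (cycle_type n \<sigma>) - 1)"
proof -
  let ?k = "card (orbit \<sigma> ` {..<n})"
  have "?k \<noteq> 0" using \<open>0 < n\<close> by auto
  then have "(n + 1) ^ ?k = (n + 1) ^ (?k - 1) * (n + 1)" by (metis power_minus_mult neq0_conv)
  then have "card {a \<in> parking_functions n. perm_act \<sigma> a = a} * (n + 1) = (n + 1) ^ (?k - 1) * (n + 1)"
    using card_fixed_parking_functions_mult[OF \<sigma>] card_fixed_lists[OF \<sigma>, of "{1..n + 1}"] by simp
  then have "card {a \<in> parking_functions n. perm_act \<sigma> a = a} = (n + 1) ^ (?k - 1)"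
    by (rule mult_right_cancel[THEN iffD1, rotated]) simp
  then show ?thesis by (simp add: cycle_type_eq_cycle_type_on[OF \<sigma>] size_cycle_type_on)
qed

section \<open>The shifted Frobenius characteristic\<close>

lemma PF_apply:
  assumes "0 < n" "0 \<notin># \<mu>"
  shows "PF n \<mu> = (if sum_mset \<mu> = n then of_nat (n + 1) ^ (size \<mu> - 1) / zee \<mu> else 0)"
proof -
  let ?A = "{\<sigma>. \<sigma> permutes {..<n} \<and> cycle_type n \<sigma> = \<mu>}"
  have A: "?A = {\<sigma>. \<sigma> permutes {..<n} \<and> cycle_type_on {..<n} \<sigma> = \<mu>}"
    by (intro Collect_cong) (metis cycle_type_eq_cycle_type_on)
  have "PF n \<mu> = (\<Sum>\<sigma>\<in>?A. of_nat (n + 1) ^ (size \<mu> - 1)) / fact n"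
    unfolding PF_def frob_def using card_fixed_parking_functions[OF _ assms(1)]
    by (auto intro!: sum.cong)
  also have "\<dots> = of_nat (card ?A) * of_nat (n + 1) ^ (size \<mu> - 1) / fact n" by simp
  finally have PF: "PF n \<mu> = of_nat (card ?A) * of_nat (n + 1) ^ (size \<mu> - 1) / fact n" .
  show ?thesis
  proof (cases "sum_mset \<mu> = n")
    case True
    then have "of_nat (card ?A) * zee \<mu> = fact n"
      using card_permutes_cycle_type_on[of "{..<n}" \<mu>] assms(2) A by simp
    then have "of_nat (card ?A) = fact n / zee \<mu>"
      using zee_nonzero[OF assms(2)] by (simp add: field_simps)
    then show ?thesis using PF True by simp
  next
    case False
    then have "?A = {}" using A sum_mset_cycle_type_on[of _ "{..<n}"] by auto
    then have "card ?A = 0" by (simp only: card.empty)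
    then show ?thesis using PF False by simp
  qed
qed

lemma size_le_sum_mset: "0 \<notin># M \<Longrightarrow> size M \<le> sum_mset (M :: nat multiset)"
  by (induction M) (auto simp: Suc_le_eq)

lemma finite_odd_partitions: "finite (odd_partitions n)"
proof (rule finite_subset)
  show "odd_partitions n \<subseteq> (\<Union>k\<le>n. multisets_of_size {..n} k)"
  proof
    fix \<mu> assume "\<mu> \<in> odd_partitions n"
    then have "0 \<notin># \<mu>" "sum_mset \<mu> = n" by (auto simp: odd_partitions_def)
    then show "\<mu> \<in> (\<Union>k\<le>n. multisets_of_size {..n} k)"
      using size_le_sum_mset[of \<mu>] sum_mset.remove
      by (fastforce simp: multisets_of_size_def)
  qed
qed auto

lemma SH_apply:
  assumes "0 < n"
  shows "SH n \<mu> =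
    (if \<mu> \<in> odd_partitions n then 2 ^ size \<mu> * of_nat (n + 1) ^ (size \<mu> - 1) / zee \<mu> else 0)"
proof (cases "\<forall>i\<in>#\<mu>. odd i")
  case True
  then have "0 \<notin># \<mu>" by fastforce
  then show ?thesis using True PF_apply[OF assms] by (simp add: SH_def shiftify_def odd_partitions_def)
qed (auto simp: SH_def shiftify_def odd_partitions_def)

theorem theorem2p1:
  fixes n :: nat
  assumes "n \<ge> 1"
  shows "SH n = (\<lambda>mu. \<Sum>lam\<in>odd_partitions n.
            (1 / zee lam) * 2 ^ size lam * of_nat (n + 1) ^ (size lam - 1) * psum lam mu)"
proof
  fix \<mu>
  have "(\<Sum>lam\<in>odd_partitions n.
          (1 / zee lam) * 2 ^ size lam * of_nat (n + 1) ^ (size lam - 1) * psum lam \<mu>)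
      = (\<Sum>lam\<in>odd_partitions n.
          if lam = \<mu> then 2 ^ size lam * of_nat (n + 1) ^ (size lam - 1) / zee lam else 0)"
    by (rule sum.cong) (auto simp: psum_def)
  also have "\<dots> = SH n \<mu>"
    using SH_apply[of n \<mu>] assms by (simp add: sum.delta[OF finite_odd_partitions])
  finally show "SH n \<mu> = (\<Sum>lam\<in>odd_partitions n.
      (1 / zee lam) * 2 ^ size lam * of_nat (n + 1) ^ (size lam - 1) * psum lam \<mu>)" by simp
qed

end
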